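(* Let $V:=\{\alpha\in\ell^\infty_w:\ G_{\tilde\psi,\psi}\alpha=\alpha\}$. Then $C_{\tilde\psi}$ maps $\mathcal H^\infty_w$ into $V$, and $C_{\tilde\psi}:(\mathcal H^\infty_w,\|\cdot\|_{\mathcal H^\infty_w})\to(V,\|\cdot\|_{\ell^\infty_w})$ is an isometric isomorphism (a linear, isometric bijection).
   Context: Standing setting. $\mathcal H$ is a separable complex Hilbert space with inner product $\langle\cdot,\cdot\rangle$, linear in the first and conjugate-linear in the second argument. $X$ is a countable index set. A weight is a map $w:X\to(0,\infty)$; $\ell^\infty_w$ is the Banach space of sequences $\alpha=(\alpha_k)_{k\in X}$ with $\|\alpha\|_{\ell^\infty_w}:=\sup_{k\in X}|\alpha_k|w(k)<\infty$. $\psi=(\psi_k)_{k\in X}$ is a frame for $\mathcal H$ and $\tilde\psi=(\tilde\psi_k)_{k\in X}$ is a dual frame, i.e. $f=\sum_{k}\langle f,\tilde\psi_k\rangle\psi_k=\sum_k\langle f,\psi_k\rangle\tilde\psi_k$ for all $f\in\mathcal H$ (unconditional convergence in $\mathcal H$). The cross Gram matrix $G_{\tilde\psi,\psi}$ has entries $(G_{\tilde\psi,\psi})_{k,l}=\langle\psi_l,\tilde\psi_k\rangle$ and acts by $(G_{\tilde\psi,\psi}\alpha)_k=\sum_{l\in X}\langle\psi_l,\tilde\psi_k\rangle\alpha_l$; it is assumed to define a bounded operator on $\ell^\infty_w$, meaning these series converge absolutely for every $\alpha\in\ell^\infty_w$ and $G_{\tilde\psi,\psi}:\ell^\infty_w\to\ell^\infty_w$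 is bounded (equivalently $\|G_{\tilde\psi,\psi}\|_{\mathcal B(\ell^\infty_w)}=\sup_{k}\sum_{l}|\langle\psi_l,\tilde\psi_k\rangle|\,w(k)/w(l)<\infty$). Let $\mathcal H^{00}:=\operatorname{span}\{\tilde\psi_k:k\in X\}$ (finite linear combinations), a dense subspace of $\mathcal H$. Equip $\mathcal H$ with the locally convex topology $\sigma(\mathcal H,\mathcal H^{00})$ generated by the seminorms $f\mapsto|\langle f,v\rangle|$, $v\in\mathcal H^{00}$ (Hausdorff and metrizable). Let $\overline{\mathcal H}$ be the completion of $\mathcal H$ in this topology, with $\mathcal H\subseteq\overline{\mathcal H}$, and for each $v\in\mathcal H^{00}$ let $f\mapsto\langle f,v\rangle_{\overline{\mathcal H},\mathcal H^{00}}$ be the unique continuous linear extension of $f\mapsto\langle f,v\rangle$ to $\overline{\mathcal H}$. Define $\mathcal H^\infty_w$ as the set of all $f\in\overline{\mathcal H}$ for which there is a sequence $(f_n)_{n\ge1}\subseteq\mathcal H$ converging to $f$ in $\sigma(\overline{\mathcal H},\mathcal H^{00})$ (i.e. $\langle f_n,v\rangle\to\langle f,v\rangle_{\overline{\mathcal H},\mathcal H^{00}}$ for all $v\in\mathcal H^{00}$) with $\sup_{n\in\mathbb N,k\in X}|\langle f_n,\tilde\psi_k\rangle|w(k)<\infty$. The coefficient operator is $C_{\tilde\psi}:\mathcal H^\infty_w\to\ell^\infty_w$, $C_{\tilde\psi}f=(\langle f,\tilde\psi_k\rangle_{\overline{\mathcal H},\mathcal H^{00}})_{k\in X}$, and the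 norm on $\mathcal H^\infty_w$ is $\|f\|_{\mathcal H^\infty_w}:=\|C_{\tilde\psi}f\|_{\ell^\infty_w}$. *)

theory Defs
  imports "HOL-Analysis.Analysis"
begin

text \<open>Complex Hilbert spaces (the distribution has no complex inner product class):
  a real Banach space with a complex scalar multiplication extending the real one,
  and a complex inner product, linear in the first and conjugate-linear in the
  second argument, inducing the norm.\<close>

class chilbert_space = banach +
  fixes scaleC :: "complex \<Rightarrow> 'a \<Rightarrow> 'a"
    and cinner :: "'a \<Rightarrow> 'a \<Rightarrow> complex"
  assumes scaleC_add_right: "scaleC a (x + y) = scaleC a x + scaleC a y"
    and scaleC_add_left: "scaleC (a + b) x = scaleC a x + scaleC b x"
    and scaleC_scaleC: "scaleC a (scaleC b x) = scaleC (a * b) x"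
    and scaleC_one: "scaleC 1 x = x"
    and scaleC_of_real: "scaleC (complex_of_real r) x = scaleR r x"
    and cinner_add_left: "cinner (x + y) z = cinner x z + cinner y z"
    and cinner_scaleC_left: "cinner (scaleC a x) y = a * cinner x y"
    and cinner_commute: "cinner y x = cnj (cinner x y)"
    and cinner_norm: "cinner x x = complex_of_real ((norm x)\<^sup>2)"

definition lw :: "('x \<Rightarrow> real) \<Rightarrow> ('x \<Rightarrow> complex) set" where
  "lw w = {\<alpha>. bdd_above (range (\<lambda>k. norm (\<alpha> k) * w k))}"

definition lw_norm :: "('x \<Rightarrow> real) \<Rightarrow> ('x \<Rightarrow> complex) \<Rightarrow> real" where
  "lw_norm w \<alpha> = (SUP k. norm (\<alpha> k) * w k)"

text \<open>Frames and dual frames (unconditional convergence = has_sum over the countable index set).\<close>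

definition is_frame :: "('x \<Rightarrow> 'h::chilbert_space) \<Rightarrow> bool" where
  "is_frame \<psi> \<longleftrightarrow> (\<exists>A B. 0 < A \<and> A \<le> B \<and>
     (\<forall>f. (\<lambda>k. (norm (cinner f (\<psi> k)))\<^sup>2) summable_on UNIV \<and>
          A * (norm f)\<^sup>2 \<le> (\<Sum>\<^sub>\<infinity>k. (norm (cinner f (\<psi> k)))\<^sup>2) \<and>
          (\<Sum>\<^sub>\<infinity>k. (norm (cinner f (\<psi> k)))\<^sup>2) \<le> B * (norm f)\<^sup>2))"

definition dual_frame :: "('x \<Rightarrow> 'h::chilbert_space) \<Rightarrow> ('x \<Rightarrow> 'h) \<Rightarrow> bool" where
  "dual_frame \<psi> \<psi>d \<longleftrightarrow> is_frame \<psi> \<and> is_frame \<psi>d \<and>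
     (\<forall>f. ((\<lambda>k. scaleC (cinner f (\<psi>d k)) (\<psi> k)) has_sum f) UNIV \<and>
          ((\<lambda>k. scaleC (cinner f (\<psi> k)) (\<psi>d k)) has_sum f) UNIV)"

definition gram :: "('x \<Rightarrow> 'h::chilbert_space) \<Rightarrow> ('x \<Rightarrow> 'h) \<Rightarrow> ('x \<Rightarrow> complex) \<Rightarrow> ('x \<Rightarrow> complex)" where
  "gram \<psi> \<psi>d \<alpha> = (\<lambda>k. \<Sum>\<^sub>\<infinity>l. cinner (\<psi> l) (\<psi>d k) * \<alpha> l)"

definition H00 :: "('x \<Rightarrow> 'h::chilbert_space) \<Rightarrow> 'h set" where
  "H00 \<psi>d = {v. \<exists>F c. finite F \<and> v = (\<Sum>k\<in>F. scaleC (c k) (\<psi>d k))}"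

text \<open>Completion of \<open>\<H>\<close> w.r.t. \<open>\<sigma>(\<H>,\<H>\<^sup>0\<^sup>0)\<close> (a Hausdorff metrizable topology, so
  sequences suffice): an element is represented by its pairing \<open>v \<mapsto> \<langle>f,v\<rangle>\<close> on \<open>\<H>\<^sup>0\<^sup>0\<close>
  (set to 0 outside \<open>\<H>\<^sup>0\<^sup>0\<close>), and the elements are exactly the pointwise limits of
  \<open>\<langle>f_n,\<cdot>\<rangle>\<close> for (weak Cauchy) sequences \<open>f_n\<close> in \<open>\<H>\<close>.  The vector \<open>f \<in> \<H>\<close> is
  identified with \<open>Hemb \<psi>d f\<close>; the extended pairing \<open>\<langle>F,v\<rangle>\<close> is \<open>F v\<close>.\<close>

definition Hemb :: "('x \<Rightarrow> 'h::chilbert_space) \<Rightarrow> 'h \<Rightarrow> ('h \<Rightarrow> complex)" where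
  "Hemb \<psi>d f = (\<lambda>v. if v \<in> H00 \<psi>d then cinner f v else 0)"

definition Hbar :: "('x \<Rightarrow> 'h::chilbert_space) \<Rightarrow> ('h \<Rightarrow> complex) set" where
  "Hbar \<psi>d = {F. (\<forall>v. v \<notin> H00 \<psi>d \<longrightarrow> F v = 0) \<and>
     (\<exists>fs::nat \<Rightarrow> 'h. \<forall>v\<in>H00 \<psi>d. (\<lambda>n. cinner (fs n) v) \<longlonglongrightarrow> F v)}"

definition Hinf :: "('x \<Rightarrow> real) \<Rightarrow> ('x \<Rightarrow> 'h::chilbert_space) \<Rightarrow> ('h \<Rightarrow> complex) set" where
  "Hinf w \<psi>d = {F \<in> Hbar \<psi>d. \<exists>fs::nat \<Rightarrow> 'h.
     (\<forall>v\<in>H00 \<psi>d. (\<lambda>n. cinner (fs n) v) \<longlonglongrightarrow> F v) \<and>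
     bdd_above {norm (cinner (fs n) (\<psi>d k)) * w k | n k. True}}"

definition coef :: "('x \<Rightarrow> 'h::chilbert_space) \<Rightarrow> ('h \<Rightarrow> complex) \<Rightarrow> ('x \<Rightarrow> complex)" where
  "coef \<psi>d F = (\<lambda>k. F (\<psi>d k))"

definition Hinf_norm :: "('x \<Rightarrow> real) \<Rightarrow> ('x \<Rightarrow> 'h::chilbert_space) \<Rightarrow> ('h \<Rightarrow> complex) \<Rightarrow> real" where
  "Hinf_norm w \<psi>d F = lw_norm w (coef \<psi>d F)"

end

theory Submission
  imports Defs
begin

text \<open>Every \<open>F \<in> \<H>\<^sup>\<infinity>\<^sub>w\<close> is a weak limit of vectors \<open>f\<^sub>n \<in> \<H>\<close> whose weighted coefficients
  are bounded by some \<open>C\<close>. The coefficients of each \<open>f\<^sub>n\<close> are reproduced by the Gram matrix,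
  \<open>\<langle>f\<^sub>n,\<psi>\<^sub>k\<rangle> = \<Sum>\<^sub>l \<langle>\<psi>\<^sub>l,\<psi>\<^sub>k\<rangle>\<langle>f\<^sub>n,\<psi>\<^sub>l\<rangle>\<close>, and these series are dominated by
  \<open>\<Sum>\<^sub>l |\<langle>\<psi>\<^sub>l,\<psi>\<^sub>k\<rangle>| C/w(l)\<close>, which converges because \<open>G\<close> acts on \<open>\<ell>\<^sup>\<infinity>\<^sub>w\<close>; so the reproducing
  identity passes to the limit coefficients of \<open>F\<close>. As \<open>\<H>\<^sup>0\<^sup>0\<close> is spanned by the dual frame,
  \<open>F\<close> is determined by its coefficients. Conversely, for a fixed point \<open>\<alpha>\<close> of \<open>G\<close> the partial
  sums \<open>\<Sum>\<^sub>l\<^sub><\<^sub>n \<alpha>\<^sub>l\<psi>\<^sub>l\<close> have as coefficients \<open>G\<close> applied to truncations of \<open>\<alpha>\<close>: these are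
  uniformly bounded in \<open>\<ell>\<^sup>\<infinity>\<^sub>w\<close> by boundedness of \<open>G\<close> and converge to \<open>G\<alpha> = \<alpha>\<close>, so their
  weak limit is a preimage of \<open>\<alpha>\<close>.\<close>

context chilbert_space begin

lemma cinner_zero_left [simp]: "cinner 0 y = 0"
  using cinner_add_left[of 0 0 y] by simp

lemma cinner_zero_right [simp]: "cinner x 0 = 0"
  using cinner_commute[of 0 x] by simp

lemma cinner_minus_left: "cinner (- x) y = - cinner x y"
proof -
  have "cinner x y + cinner (- x) y = 0" using cinner_add_left[of x "- x" y] by simp
  moreover have "cinner (- x) y = (cinner x y + cinner (- x) y) - cinner x y" by simp
  ultimately show ?thesis by simp
qed

lemma cinner_diff_left: "cinner (x - y) z = cinner x z - cinner y z"
  using cinner_add_left[of x "- y" z] by (simp add: cinner_minus_left)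

lemma cinner_add_right: "cinner x (y + z) = cinner x y + cinner x z"
  by (metis cinner_commute cinner_add_left complex_cnj_add)

lemma cinner_diff_right: "cinner x (y - z) = cinner x y - cinner x z"
  by (metis cinner_commute cinner_diff_left complex_cnj_diff)

lemma cinner_scaleC_right: "cinner x (scaleC a y) = cnj a * cinner x y"
  by (metis cinner_commute cinner_scaleC_left complex_cnj_mult)

lemma cinner_sum_left: "cinner (sum f A) y = (\<Sum>i\<in>A. cinner (f i) y)"
  by (induction A rule: infinite_finite_induct) (auto simp: cinner_add_left)

lemma cinner_sum_right: "cinner x (sum f A) = (\<Sum>i\<in>A. cinner x (f i))"
  by (induction A rule: infinite_finite_induct) (auto simp: cinner_add_right)

lemma cinner_polarization:
  "cinner x y = (complex_of_real ((norm (x + y))\<^sup>2) - complex_of_real ((norm (x - y))\<^sup>2)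
     + \<i> * (complex_of_real ((norm (x + scaleC \<i> y))\<^sup>2)
            - complex_of_real ((norm (x - scaleC \<i> y))\<^sup>2))) / 4"
proof -
  have yx: "cinner y x = cnj (cinner x y)" by (rule cinner_commute)
  have iyx: "cinner (scaleC \<i> y) x = \<i> * cnj (cinner x y)"
    by (simp add: cinner_scaleC_left yx)
  show ?thesis
    unfolding cinner_norm[symmetric]
    by (simp add: cinner_add_left cinner_add_right cinner_diff_left cinner_diff_right
        cinner_scaleC_left cinner_scaleC_right yx iyx cinner_commute[of "scaleC \<i> y" "scaleC \<i> y"]
        field_simps complex_eq_iff)
qed

end

lemma isCont_cinner_left:
  fixes y :: "'a::chilbert_space"
  shows "isCont (\<lambda>x. cinner x y) x0"
  unfolding cinner_polarization[abs_def] by (intro continuous_intros) simp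

lemma tendsto_infsum_dominated:
  fixes s :: "nat \<Rightarrow> 'x::countable \<Rightarrow> complex" and g :: "'x \<Rightarrow> real"
  assumes g: "g summable_on UNIV" and bound: "\<And>n l. norm (s n l) \<le> g l"
    and lim: "\<And>l. (\<lambda>n. s n l) \<longlonglongrightarrow> f l"
  shows "(\<lambda>n. infsum (s n) UNIV) \<longlonglongrightarrow> infsum f UNIV"
proof -
  have "\<And>l. 0 \<le> g l" using bound[of 0] norm_ge_zero order_trans by blast
  with g have "(\<lambda>l. norm (g l)) summable_on UNIV" by simp
  hence g_int: "integrable (count_space UNIV) g"
    using abs_summable_equivalent[of g UNIV] unfolding Infinite_Set_Sum.abs_summable_on_def by simp
  have integral_eq: "integral\<^sup>L (count_space UNIV) h = infsum h UNIV"
    if "integrable (count_space UNIV) h" for h :: "'x \<Rightarrow> complex"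
    using infsetsum_infsum[of h UNIV] that
    unfolding Infinite_Set_Sum.abs_summable_on_def infsetsum_def by simp
  have "integrable (count_space UNIV) f"
    by (rule integrable_dominated_convergence[OF _ _ g_int]) (auto intro: lim bound)
  moreover have "integrable (count_space UNIV) (s n)" for n
    by (rule integrable_dominated_convergence2[OF _ _ g_int]) (auto intro: lim bound)
  moreover have "(\<lambda>n. integral\<^sup>L (count_space UNIV) (s n)) \<longlonglongrightarrow> integral\<^sup>L (count_space UNIV) f"
    by (rule integral_dominated_convergence[OF _ _ g_int]) (auto intro: lim bound)
  ultimately show ?thesis by (simp add: integral_eq)
qed

definition to_nat_prefix :: "nat \<Rightarrow> 'x::countable set" where
  "to_nat_prefix n = {l. to_nat l < n}"

lemma finite_to_nat_prefix: "finite (to_nat_prefix n :: 'x::countable set)"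
proof -
  have "(to_nat_prefix n :: 'x set) = to_nat -` {..<n}" unfolding to_nat_prefix_def by auto
  thus ?thesis using finite_vimageI[OF finite_lessThan inj_to_nat, of n] by simp
qed

lemma filterlim_to_nat_prefix: "filterlim to_nat_prefix (finite_subsets_at_top UNIV) sequentially"
  unfolding filterlim_finite_subsets_at_top
proof (intro allI impI)
  fix X :: "'a set" assume "finite X \<and> X \<subseteq> UNIV"
  hence "to_nat x \<le> Max (to_nat ` X)" if "x \<in> X" for x
    using that by simp
  hence "to_nat x < n" if "Suc (Max (to_nat ` X)) \<le> n" "x \<in> X" for n x
    using that by fastforce
  hence "X \<subseteq> to_nat_prefix n" if "Suc (Max (to_nat ` X)) \<le> n" for n
    using that unfolding to_nat_prefix_def by blast
  thus "\<forall>\<^sub>F n in sequentially. finite (to_nat_prefix n) \<and> X \<subseteq> to_nat_prefix n \<and> to_nat_prefix n \<subseteq> UNIV"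
    unfolding eventually_sequentially using finite_to_nat_prefix by blast
qed

lemma has_sum_imp_tendsto_prefix_sums:
  fixes f :: "'x::countable \<Rightarrow> 'b::{comm_monoid_add,topological_space}"
  assumes "(f has_sum S) UNIV"
  shows "(\<lambda>n. sum f (to_nat_prefix n)) \<longlonglongrightarrow> S"
  using filterlim_compose[OF assms[unfolded has_sum_def] filterlim_to_nat_prefix] by (simp add: o_def)

lemma lw_norm_ge: "\<alpha> \<in> lw w \<Longrightarrow> norm (\<alpha> k) * w k \<le> lw_norm w \<alpha>"
  unfolding lw_def lw_norm_def by (auto intro: cSUP_upper)

lemma lw_norm_nonneg: "\<alpha> \<in> lw w \<Longrightarrow> 0 < w k \<Longrightarrow> 0 \<le> lw_norm w \<alpha>"
  by (meson lw_norm_ge norm_ge_zero order_trans zero_le_mult_iff less_imp_le)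

lemma lw_norm_mono:
  assumes "\<alpha> \<in> lw w" "\<And>k. norm (\<beta> k) * w k \<le> norm (\<alpha> k) * w k"
  shows "lw_norm w \<beta> \<le> lw_norm w \<alpha>"
  unfolding lw_norm_def[of w \<beta>]
  by (rule cSUP_least) (auto intro: order_trans[OF assms(2) lw_norm_ge[OF assms(1)]])

lemma lwI: "(\<And>k. norm (\<alpha> k) * w k \<le> C) \<Longrightarrow> \<alpha> \<in> lw w"
  unfolding lw_def by (auto intro!: bdd_aboveI2)

lemma H00_generator: "\<psi>d k \<in> H00 \<psi>d"
  unfolding H00_def
  by (rule CollectI, rule exI[of _ "{k}"], rule exI[of _ "\<lambda>_. 1"]) (simp add: scaleC_one)

lemma tendsto_cinner_H00:
  fixes \<psi>d :: "'x \<Rightarrow> 'h::chilbert_space"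
  assumes "\<And>k. (\<lambda>n. cinner (fs n) (\<psi>d k)) \<longlonglongrightarrow> a k"
  shows "(\<lambda>n. cinner (fs n) (\<Sum>k\<in>K. scaleC (c k) (\<psi>d k))) \<longlonglongrightarrow> (\<Sum>k\<in>K. cnj (c k) * a k)"
  unfolding cinner_sum_right cinner_scaleC_right by (intro tendsto_intros assms)

lemma Hbar_on_H00:
  fixes \<psi>d :: "'x \<Rightarrow> 'h::chilbert_space"
  assumes "F \<in> Hbar \<psi>d" and "finite K"
  shows "F (\<Sum>k\<in>K. scaleC (c k) (\<psi>d k)) = (\<Sum>k\<in>K. cnj (c k) * F (\<psi>d k))"
proof -
  obtain fs where weak_lim: "\<forall>v\<in>H00 \<psi>d. (\<lambda>n. cinner (fs n) v) \<longlonglongrightarrow> F v"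
    using assms(1) unfolding Hbar_def by blast
  have "(\<Sum>k\<in>K. scaleC (c k) (\<psi>d k)) \<in> H00 \<psi>d"
    unfolding H00_def using assms(2) by blast
  with weak_lim have "(\<lambda>n. cinner (fs n) (\<Sum>k\<in>K. scaleC (c k) (\<psi>d k))) \<longlonglongrightarrow> F (\<Sum>k\<in>K. scaleC (c k) (\<psi>d k))"
    by blast
  moreover have "(\<lambda>n. cinner (fs n) (\<Sum>k\<in>K. scaleC (c k) (\<psi>d k))) \<longlonglongrightarrow> (\<Sum>k\<in>K. cnj (c k) * F (\<psi>d k))"
    by (rule tendsto_cinner_H00, rule bspec[OF weak_lim H00_generator])
  ultimately show ?thesis by (rule LIMSEQ_unique)
qed

lemma Hbar_eqI:
  assumes "F \<in> Hbar \<psi>d" "G \<in> Hbar \<psi>d" and "coef \<psi>d F = coef \<psi>d G"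
  shows "F = G"
proof
  fix v
  have coeffs: "F (\<psi>d k) = G (\<psi>d k)" for k
    using assms(3) unfolding coef_def by meson
  show "F v = G v"
  proof (cases "v \<in> H00 \<psi>d")
    case True
    then obtain K c where "finite K" "v = (\<Sum>k\<in>K. scaleC (c k) (\<psi>d k))"
      unfolding H00_def by blast
    with assms(1,2) show ?thesis by (simp add: Hbar_on_H00 coeffs)
  next
    case False
    with assms(1,2) show ?thesis unfolding Hbar_def by simp
  qed
qed

lemma HinfI:
  assumes "\<forall>v\<in>H00 \<psi>d. (\<lambda>n. cinner (fs n) v) \<longlonglongrightarrow> F v"
    and "\<And>n k. norm (cinner (fs n) (\<psi>d k)) * w k \<le> C"
    and "\<And>v. v \<notin> H00 \<psi>d \<Longrightarrow> F v = 0"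
  shows "F \<in> Hinf w \<psi>d"
  using assms unfolding Hinf_def Hbar_def bdd_above_def by blast

lemma HinfE:
  assumes "F \<in> Hinf w \<psi>d"
  obtains fs C where "\<forall>v\<in>H00 \<psi>d. (\<lambda>n. cinner (fs n) v) \<longlonglongrightarrow> F v"
    and "\<And>n k. norm (cinner (fs n) (\<psi>d k)) * w k \<le> C"
  using assms unfolding Hinf_def bdd_above_def by blast

lemma Hinf_subset_Hbar: "Hinf w \<psi>d \<subseteq> Hbar \<psi>d"
  unfolding Hinf_def by blast

lemma inj_on_coef_Hinf: "inj_on (coef \<psi>d) (Hinf w \<psi>d)"
proof (rule inj_onI)
  fix F G assume "F \<in> Hinf w \<psi>d" "G \<in> Hinf w \<psi>d" "coef \<psi>d F = coef \<psi>d G"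
  with Hinf_subset_Hbar show "F = G" by (metis Hbar_eqI subsetD)
qed

lemma Hinf_linear_combination:
  fixes \<psi>d :: "'x \<Rightarrow> 'h::chilbert_space"
  assumes w_pos: "\<forall>k. 0 < w k" and F: "F \<in> Hinf w \<psi>d" and G: "G \<in> Hinf w \<psi>d"
  shows "(\<lambda>v. a * F v + b * G v) \<in> Hinf w \<psi>d"
proof -
  obtain fs C1 where limF: "\<forall>v\<in>H00 \<psi>d. (\<lambda>n. cinner (fs n) v) \<longlonglongrightarrow> F v"
    and bndF: "\<And>n k. norm (cinner (fs n) (\<psi>d k)) * w k \<le> C1"
    by (rule HinfE[OF F]) blast
  obtain gs C2 where limG: "\<forall>v\<in>H00 \<psi>d. (\<lambda>n. cinner (gs n) v) \<longlonglongrightarrow> G v"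
    and bndG: "\<And>n k. norm (cinner (gs n) (\<psi>d k)) * w k \<le> C2"
    by (rule HinfE[OF G]) blast
  define hs where "hs n = scaleC a (fs n) + scaleC b (gs n)" for n
  have cinner_hs: "cinner (hs n) v = a * cinner (fs n) v + b * cinner (gs n) v" for n v
    unfolding hs_def by (simp add: cinner_add_left cinner_scaleC_left)
  show ?thesis
  proof (rule HinfI[where fs = hs and C = "norm a * C1 + norm b * C2"])
    show "\<forall>v\<in>H00 \<psi>d. (\<lambda>n. cinner (hs n) v) \<longlonglongrightarrow> a * F v + b * G v"
      unfolding cinner_hs using limF limG by (auto intro!: tendsto_add tendsto_mult_left)
    show "norm (cinner (hs n) (\<psi>d k)) * w k \<le> norm a * C1 + norm b * C2" for n k
    proof -
      have "norm (cinner (hs n) (\<psi>d k)) * w k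
          \<le> (norm a * norm (cinner (fs n) (\<psi>d k)) + norm b * norm (cinner (gs n) (\<psi>d k))) * w k"
        unfolding cinner_hs using w_pos[rule_format, of k]
        by (intro mult_right_mono) (auto intro: order_trans[OF norm_triangle_ineq] simp: norm_mult)
      also have "\<dots> = norm a * (norm (cinner (fs n) (\<psi>d k)) * w k)
          + norm b * (norm (cinner (gs n) (\<psi>d k)) * w k)"
        by (simp add: algebra_simps)
      also have "\<dots> \<le> norm a * C1 + norm b * C2"
        by (intro add_mono mult_left_mono bndF bndG) auto
      finally show ?thesis .
    qed
    have "F \<in> Hbar \<psi>d" "G \<in> Hbar \<psi>d"
      using F G Hinf_subset_Hbar by blast+
    then show "a * F v + b * G v = 0" if "v \<notin> H00 \<psi>d" for v
      using that unfolding Hbar_def by simp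
  qed
qed

lemma Hinf_of_coeff_limits:
  fixes \<psi>d :: "'x \<Rightarrow> 'h::chilbert_space"
  assumes bound: "\<And>n k. norm (cinner (fs n) (\<psi>d k)) * w k \<le> C"
    and coeff_lim: "\<And>k. (\<lambda>n. cinner (fs n) (\<psi>d k)) \<longlonglongrightarrow> a k"
  shows "\<exists>F\<in>Hinf w \<psi>d. coef \<psi>d F = a"
proof -
  define F where "F v = (if v \<in> H00 \<psi>d then lim (\<lambda>n. cinner (fs n) v) else 0)" for v
  have F_lim: "(\<lambda>n. cinner (fs n) v) \<longlonglongrightarrow> F v" if v: "v \<in> H00 \<psi>d" for v
  proof -
    obtain K c where v_eq: "v = (\<Sum>k\<in>K. scaleC (c k) (\<psi>d k))"
      using v unfolding H00_def by blast
    have "(\<lambda>n. cinner (fs n) v) \<longlonglongrightarrow> (\<Sum>k\<in>K. cnj (c k) * a k)"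
      unfolding v_eq by (rule tendsto_cinner_H00[OF coeff_lim])
    moreover from this have "F v = (\<Sum>k\<in>K. cnj (c k) * a k)"
      using v unfolding F_def by (simp add: limI)
    ultimately show ?thesis by simp
  qed
  have "F \<in> Hinf w \<psi>d"
  proof (rule HinfI[where fs = fs and C = C])
    show "\<forall>v\<in>H00 \<psi>d. (\<lambda>n. cinner (fs n) v) \<longlonglongrightarrow> F v"
      using F_lim by blast
  qed (simp_all add: bound F_def)
  moreover have "coef \<psi>d F = a"
    using LIMSEQ_unique[OF F_lim[OF H00_generator] coeff_lim] by (simp add: coef_def fun_eq_iff)
  ultimately show ?thesis by blast
qed

lemma has_sum_gram_coeffs:
  fixes \<psi> \<psi>d :: "'x \<Rightarrow> 'h::chilbert_space"
  assumes "dual_frame \<psi> \<psi>d"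
  shows "((\<lambda>l. cinner (\<psi> l) (\<psi>d k) * cinner f (\<psi>d l)) has_sum cinner f (\<psi>d k)) UNIV"
proof -
  have expansion: "((\<lambda>l. scaleC (cinner f (\<psi>d l)) (\<psi> l)) has_sum f) UNIV"
    using assms unfolding dual_frame_def by blast
  have "Modules.additive (\<lambda>x. cinner x (\<psi>d k))"
    by (simp add: Modules.additive_def cinner_add_left)
  from has_sum_comm_additive[OF this isCont_cinner_left[unfolded isCont_def] expansion]
  show ?thesis by (simp add: o_def cinner_scaleC_left mult.commute)
qed

lemma gram_fixes_coeff_limits:
  fixes \<psi> \<psi>d :: "'x::countable \<Rightarrow> 'h::chilbert_space"
  assumes w_pos: "\<forall>k. 0 < w k"
    and dual: "dual_frame \<psi> \<psi>d"
    and G_abs: "\<forall>\<alpha>\<in>lw w. \<forall>k. (\<lambda>l. norm (cinner (\<psi> l) (\<psi>d k) * \<alpha> l)) summable_on UNIV"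
    and bound: "\<And>n k. norm (cinner (fs n) (\<psi>d k)) * w k \<le> C"
    and coeff_lim: "\<And>k. (\<lambda>n. cinner (fs n) (\<psi>d k)) \<longlonglongrightarrow> a k"
  shows "gram \<psi> \<psi>d a = a"
proof
  fix k
  have C: "0 \<le> C"
    using bound[of 0 k] w_pos by (meson norm_ge_zero order_trans zero_le_mult_iff less_imp_le)
  define \<beta> where "\<beta> l = complex_of_real (C / w l)" for l
  have norm_\<beta>: "norm (\<beta> l) = C / w l" for l
    using w_pos[rule_format, of l] C by (simp add: \<beta>_def norm_divide)
  have "\<beta> \<in> lw w"
    by (rule lwI[where C = C]) (use w_pos C in \<open>simp add: norm_\<beta> less_imp_le\<close>)
  from G_abs[rule_format, OF this]
  have dominator: "(\<lambda>l. norm (cinner (\<psi> l) (\<psi>d k) * \<beta> l)) summable_on UNIV" .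
  have dominated:
    "norm (cinner (\<psi> l) (\<psi>d k) * cinner (fs n) (\<psi>d l)) \<le> norm (cinner (\<psi> l) (\<psi>d k) * \<beta> l)"
    for n l
    using bound[of n l] w_pos[rule_format, of l]
    by (simp add: norm_mult norm_\<beta> pos_le_divide_eq mult_left_mono mult.assoc)
  have "(\<lambda>n. \<Sum>\<^sub>\<infinity>l. cinner (\<psi> l) (\<psi>d k) * cinner (fs n) (\<psi>d l)) \<longlonglongrightarrow> gram \<psi> \<psi>d a k"
    unfolding gram_def
    by (rule tendsto_infsum_dominated[OF dominator dominated tendsto_mult_left[OF coeff_lim]])
  moreover have "(\<Sum>\<^sub>\<infinity>l. cinner (\<psi> l) (\<psi>d k) * cinner (fs n) (\<psi>d l)) = cinner (fs n) (\<psi>d k)" for n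
    using has_sum_gram_coeffs[OF dual] by (rule infsumI)
  ultimately have "(\<lambda>n. cinner (fs n) (\<psi>d k)) \<longlonglongrightarrow> gram \<psi> \<psi>d a k"
    by simp
  thus "gram \<psi> \<psi>d a k = a k"
    using coeff_lim by (rule LIMSEQ_unique)
qed

lemma coef_Hinf_fixed_by_gram:
  fixes \<psi> \<psi>d :: "'x::countable \<Rightarrow> 'h::chilbert_space"
  assumes w_pos: "\<forall>k. 0 < w k"
    and dual: "dual_frame \<psi> \<psi>d"
    and G_abs: "\<forall>\<alpha>\<in>lw w. \<forall>k. (\<lambda>l. norm (cinner (\<psi> l) (\<psi>d k) * \<alpha> l)) summable_on UNIV"
    and F: "F \<in> Hinf w \<psi>d"
  shows "coef \<psi>d F \<in> lw w \<and> gram \<psi> \<psi>d (coef \<psi>d F) = coef \<psi>d F"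
proof
  obtain fs C where lim_H00: "\<forall>v\<in>H00 \<psi>d. (\<lambda>n. cinner (fs n) v) \<longlonglongrightarrow> F v"
    and bound: "\<And>n k. norm (cinner (fs n) (\<psi>d k)) * w k \<le> C"
    by (rule HinfE[OF F]) blast
  have coeff_lim: "(\<lambda>n. cinner (fs n) (\<psi>d k)) \<longlonglongrightarrow> coef \<psi>d F k" for k
    unfolding coef_def by (rule bspec[OF lim_H00 H00_generator])
  have "norm (coef \<psi>d F k) * w k \<le> C" for k
    by (rule tendsto_le[OF trivial_limit_sequentially tendsto_const
          tendsto_mult_right[OF tendsto_norm[OF coeff_lim]]]) (simp add: bound)
  thus "coef \<psi>d F \<in> lw w" by (rule lwI)
  show "gram \<psi> \<psi>d (coef \<psi>d F) = coef \<psi>d F"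
    by (rule gram_fixes_coeff_limits[OF w_pos dual G_abs bound coeff_lim])
qed

lemma gram_truncation:
  assumes "finite A"
  shows "gram \<psi> \<psi>d (\<lambda>l. if l \<in> A then \<alpha> l else 0) k = (\<Sum>l\<in>A. cinner (\<psi> l) (\<psi>d k) * \<alpha> l)"
proof -
  have "gram \<psi> \<psi>d (\<lambda>l. if l \<in> A then \<alpha> l else 0) k = infsum (\<lambda>l. cinner (\<psi> l) (\<psi>d k) * \<alpha> l) A"
    unfolding gram_def by (rule infsum_cong_neutral) auto
  with assms show ?thesis by simp
qed

lemma coef_Hinf_onto_gram_fixed:
  fixes \<psi> \<psi>d :: "'x::countable \<Rightarrow> 'h::chilbert_space"
  assumes w_pos: "\<forall>k. 0 < w k"
    and G_abs: "\<forall>\<alpha>\<in>lw w. \<forall>k. (\<lambda>l. norm (cinner (\<psi> l) (\<psi>d k) * \<alpha> l)) summable_on UNIV"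
    and G_bdd: "\<exists>M. \<forall>\<alpha>\<in>lw w. gram \<psi> \<psi>d \<alpha> \<in> lw w \<and>
                   lw_norm w (gram \<psi> \<psi>d \<alpha>) \<le> M * lw_norm w \<alpha>"
    and \<alpha>: "\<alpha> \<in> lw w" and fixed: "gram \<psi> \<psi>d \<alpha> = \<alpha>"
  shows "\<exists>F\<in>Hinf w \<psi>d. coef \<psi>d F = \<alpha>"
proof -
  obtain M where M: "\<forall>\<beta>\<in>lw w. gram \<psi> \<psi>d \<beta> \<in> lw w \<and> lw_norm w (gram \<psi> \<psi>d \<beta>) \<le> M * lw_norm w \<beta>"
    using G_bdd by blast
  define fs where "fs n = (\<Sum>l\<in>to_nat_prefix n. scaleC (\<alpha> l) (\<psi> l))" for n
  define \<alpha>n where "\<alpha>n n l = (if l \<in> to_nat_prefix n then \<alpha> l else 0)" for n l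
  have cinner_fs: "cinner (fs n) (\<psi>d k) = (\<Sum>l\<in>to_nat_prefix n. cinner (\<psi> l) (\<psi>d k) * \<alpha> l)" for n k
    unfolding fs_def cinner_sum_left cinner_scaleC_left by (simp add: mult.commute)
  have \<alpha>n_le: "norm (\<alpha>n n l) * w l \<le> norm (\<alpha> l) * w l" for n l
    unfolding \<alpha>n_def using w_pos[rule_format, of l] by simp
  have \<alpha>n: "\<alpha>n n \<in> lw w" for n
    using \<alpha>n_le lw_norm_ge[OF \<alpha>] by (blast intro: lwI order_trans)
  have bound: "norm (cinner (fs n) (\<psi>d k)) * w k \<le> max M 0 * lw_norm w \<alpha>" for n k
  proof -
    have "norm (cinner (fs n) (\<psi>d k)) * w k = norm (gram \<psi> \<psi>d (\<alpha>n n) k) * w k"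
      unfolding cinner_fs \<alpha>n_def gram_truncation[OF finite_to_nat_prefix] ..
    also have "\<dots> \<le> lw_norm w (gram \<psi> \<psi>d (\<alpha>n n))"
      by (rule lw_norm_ge) (use M \<alpha>n in blast)
    also have "\<dots> \<le> M * lw_norm w (\<alpha>n n)"
      using M \<alpha>n by blast
    also have "\<dots> \<le> max M 0 * lw_norm w (\<alpha>n n)"
      by (intro mult_right_mono lw_norm_nonneg[OF \<alpha>n w_pos[rule_format]]) simp
    also have "\<dots> \<le> max M 0 * lw_norm w \<alpha>"
      by (intro mult_left_mono lw_norm_mono[OF \<alpha>] \<alpha>n_le) auto
    finally show ?thesis .
  qed
  have coeff_lim: "(\<lambda>n. cinner (fs n) (\<psi>d k)) \<longlonglongrightarrow> \<alpha> k" for k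
  proof -
    have "(\<lambda>l. cinner (\<psi> l) (\<psi>d k) * \<alpha> l) summable_on UNIV"
      by (rule abs_summable_summable[OF G_abs[rule_format, OF \<alpha>]])
    hence "((\<lambda>l. cinner (\<psi> l) (\<psi>d k) * \<alpha> l) has_sum gram \<psi> \<psi>d \<alpha> k) UNIV"
      unfolding gram_def by (rule has_sum_infsum)
    hence "((\<lambda>l. cinner (\<psi> l) (\<psi>d k) * \<alpha> l) has_sum \<alpha> k) UNIV"
      using fixed by simp
    thus ?thesis unfolding cinner_fs by (rule has_sum_imp_tendsto_prefix_sums)
  qed
  show ?thesis
    by (rule Hinf_of_coeff_limits[OF bound coeff_lim])
qed

theorem mainTheorem9:
  fixes \<psi> \<psi>d :: "'x::countable \<Rightarrow> 'h::chilbert_space"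
    and w :: "'x \<Rightarrow> real"
    and V :: "('x \<Rightarrow> complex) set"
  assumes separable: "\<exists>D::'h set. countable D \<and> closure D = UNIV"
    and w_pos: "\<forall>k. 0 < w k"
    and dual: "dual_frame \<psi> \<psi>d"
    and G_abs: "\<forall>\<alpha>\<in>lw w. \<forall>k. (\<lambda>l. norm (cinner (\<psi> l) (\<psi>d k) * \<alpha> l)) summable_on UNIV"
    and G_bdd: "\<exists>M. \<forall>\<alpha>\<in>lw w. gram \<psi> \<psi>d \<alpha> \<in> lw w \<and>
                   lw_norm w (gram \<psi> \<psi>d \<alpha>) \<le> M * lw_norm w \<alpha>"
    and V_def: "V = {\<alpha> \<in> lw w. gram \<psi> \<psi>d \<alpha> = \<alpha>}"
  shows "coef \<psi>d ` Hinf w \<psi>d \<subseteq> V \<and>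
    (\<forall>F\<in>Hinf w \<psi>d. \<forall>G\<in>Hinf w \<psi>d. \<forall>a b::complex.
           (\<lambda>v. a * F v + b * G v) \<in> Hinf w \<psi>d \<and>
           coef \<psi>d (\<lambda>v. a * F v + b * G v) = (\<lambda>k. a * coef \<psi>d F k + b * coef \<psi>d G k)) \<and>
    (\<forall>F\<in>Hinf w \<psi>d. lw_norm w (coef \<psi>d F) = Hinf_norm w \<psi>d F) \<and>
    bij_betw (coef \<psi>d) (Hinf w \<psi>d) V"
proof -
  have into: "coef \<psi>d ` Hinf w \<psi>d \<subseteq> V"
    using coef_Hinf_fixed_by_gram[OF w_pos dual G_abs] unfolding V_def by blast
  moreover have "V \<subseteq> coef \<psi>d ` Hinf w \<psi>d"
    using coef_Hinf_onto_gram_fixed[OF w_pos G_abs G_bdd] unfolding V_def by blast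
  ultimately have "bij_betw (coef \<psi>d) (Hinf w \<psi>d) V"
    using inj_on_coef_Hinf unfolding bij_betw_def by blast
  moreover have "\<forall>F\<in>Hinf w \<psi>d. \<forall>G\<in>Hinf w \<psi>d. \<forall>a b::complex.
           (\<lambda>v. a * F v + b * G v) \<in> Hinf w \<psi>d \<and>
           coef \<psi>d (\<lambda>v. a * F v + b * G v) = (\<lambda>k. a * coef \<psi>d F k + b * coef \<psi>d G k)"
    by (simp add: coef_def Hinf_linear_combination[OF w_pos])
  ultimately show ?thesis
    using into by (simp add: Hinf_norm_def)
qed

end
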